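(* In the Com-IC model with $q_{\mathcal{A}|\emptyset}=q_{\mathcal{B}|\emptyset}=1$ (and arbitrary $q_{\mathcal{A}|\mathcal{B}},q_{\mathcal{B}|\mathcal{A}}\in[0,1]$), for any fixed $\mathcal{B}$-seed set $S_\mathcal{B}$ the set function $S_\mathcal{A}\mapsto\sigma_\mathcal{A}(S_\mathcal{A},S_\mathcal{B})$ is submodular.
   Context: Com-IC model. Let $G=(V,E,p)$ be a directed graph with $p:E\to[0,1]$ and $N^-(v)$ the in-neighbours of $v$. Two items $\mathcal{A},\mathcal{B}$; GAPs $\mathbf{Q}=(q_{\mathcal{A}|\emptyset},q_{\mathcal{A}|\mathcal{B}},q_{\mathcal{B}|\emptyset},q_{\mathcal{B}|\mathcal{A}})\in[0,1]^4$. Given seed sets $S_\mathcal{A},S_\mathcal{B}\subseteq V$, randomness: each edge $(u,v)$ independently live w.p. $p(u,v)$; each node $v$ independently draws $\alpha^v_\mathcal{A},\alpha^v_\mathcal{B}$ uniform on $[0,1]$, a uniformly random permutation $\pi_v$ of $N^-(v)$, and a fair coin $\tau_v\in\{\mathcal{A},\mathcal{B}\}$. For each item $X$ each node is $X$-idle, $X$-suspended, $X$-adopted or $X$-rejected; initially all idle. At step $0$ nodes of $S_\mathcal{A}$ become $\mathcal{A}$-adopted and nodes of $S_\mathcal{B}$ become $\mathcal{B}$-adopted (order for nodes in both given by $\tau_v$). At step $t\ge1$, $v$ is informed of $X$ by in-neighbour $u$ if $(u,v)$ is live and $u$ adopted $X$ at step $t-1$; informing in-neighbours are processed in order $\pi_v$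 (an in-neighbour that adopted both items is processed for both, in its adoption order). When $v$ is informed of $X$ ($Y$ the other item) while $X$-idle: if $Y$-adopted, $v$ becomes $X$-adopted if $\alpha^v_X\le q_{X|Y}$, else $X$-rejected; otherwise $X$-adopted if $\alpha^v_X\le q_{X|\emptyset}$, else $X$-suspended. Informing a non-$X$-idle node of $X$ has no effect. Reconsideration: when an $X$-suspended node becomes $Y$-adopted, it becomes $X$-adopted if $\alpha^v_X\le q_{X|Y}$, else $X$-rejected. The process stops when nothing changes. $\sigma_\mathcal{A}(S_\mathcal{A},S_\mathcal{B})$ is the expected final number of $\mathcal{A}$-adopted nodes. Submodular: $f(S\cup\{x\})-f(S)\ge f(T\cup\{x\})-f(T)$ for all $S\subseteq T\subseteq V$, $x\notin T$. *)

theory Defs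
  imports "HOL-Probability.Probability" "HOL-Combinatorics.Multiset_Permutations"
begin

datatype item = IA | IB

fun other :: "item \<Rightarrow> item" where
  "other IA = IB" | "other IB = IA"

datatype status = Idle | Suspended | Adopted | Rejected

text \<open>GAPs Q = (q_A|0, q_A|B, q_B|0, q_B|A).\<close>
type_synonym gaps = "real \<times> real \<times> real \<times> real"

fun q_none :: "gaps \<Rightarrow> item \<Rightarrow> real" where
  "q_none (a0, ab, b0, ba) IA = a0"
| "q_none (a0, ab, b0, ba) IB = b0"

fun q_cond :: "gaps \<Rightarrow> item \<Rightarrow> real" where
  "q_cond (a0, ab, b0, ba) IA = ab"
| "q_cond (a0, ab, b0, ba) IB = ba"

record nstate =
  st :: "item \<Rightarrow> status"
  atime :: "item \<Rightarrow> nat option"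
  aord :: "item list"

definition init_node :: nstate where
  "init_node = \<lparr>st = (\<lambda>_. Idle), atime = (\<lambda>_. None), aord = []\<rparr>"

definition adopt :: "nat \<Rightarrow> item \<Rightarrow> nstate \<Rightarrow> nstate" where
  "adopt t X s = s\<lparr>st := (st s)(X := Adopted), atime := (atime s)(X := Some t),
                    aord := aord s @ [X]\<rparr>"

definition set_status :: "item \<Rightarrow> status \<Rightarrow> nstate \<Rightarrow> nstate" where
  "set_status X c s = s\<lparr>st := (st s)(X := c)\<rparr>"

text \<open>Adoption of X at step t followed by reconsideration of a suspended other item.
  \<open>al\<close> is the node's pair of thresholds \<alpha>^v_A, \<alpha>^v_B.\<close>
definition adopt_recons :: "gaps \<Rightarrow> (item \<Rightarrow> real) \<Rightarrow> nat \<Rightarrow> item \<Rightarrow> nstate \<Rightarrow> nstate" where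
  "adopt_recons Q al t X s =
     (let s' = adopt t X s; Y = other X in
      if st s' Y = Suspended then
        (if al Y \<le> q_cond Q Y then adopt t Y s' else set_status Y Rejected s')
      else s')"

definition inform :: "gaps \<Rightarrow> (item \<Rightarrow> real) \<Rightarrow> nat \<Rightarrow> item \<Rightarrow> nstate \<Rightarrow> nstate" where
  "inform Q al t X s =
     (if st s X \<noteq> Idle then s
      else if st s (other X) = Adopted then
        (if al X \<le> q_cond Q X then adopt_recons Q al t X s else set_status X Rejected s)
      else
        (if al X \<le> q_none Q X then adopt_recons Q al t X s else set_status X Suspended s))"

text \<open>A possible world: live-edge predicate, thresholds \<alpha>, permutations \<pi>_v
  (as lists of in-neighbours), and coins \<tau>_v.\<close>
type_synonym 'v dworld = "(('v \<times> 'v) \<Rightarrow> bool) \<times> ('v \<Rightarrow> 'v list) \<times> ('v \<Rightarrow> item)"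
type_synonym 'v world = "'v dworld \<times> (item \<times> 'v \<Rightarrow> real)"

type_synonym 'v gstate = "'v \<Rightarrow> nstate"

definition seed_state :: "'v set \<Rightarrow> 'v set \<Rightarrow> ('v \<Rightarrow> item) \<Rightarrow> 'v gstate" where
  "seed_state SA SB tau v =
     (if v \<in> SA \<and> v \<in> SB then adopt 0 (other (tau v)) (adopt 0 (tau v) init_node)
      else if v \<in> SA then adopt 0 IA init_node
      else if v \<in> SB then adopt 0 IB init_node
      else init_node)"

definition informs :: "('v \<times> 'v \<Rightarrow> bool) \<Rightarrow> ('v \<Rightarrow> 'v list) \<Rightarrow> 'v gstate \<Rightarrow> nat \<Rightarrow> 'v \<Rightarrow> item list" where
  "informs live prm S t v =
     concat (map (\<lambda>u. if live (u, v) then filter (\<lambda>X. atime (S u) X = Some (t - 1)) (aord (S u)) else [])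
                 (prm v))"

definition step :: "gaps \<Rightarrow> 'v world \<Rightarrow> nat \<Rightarrow> 'v gstate \<Rightarrow> 'v gstate" where
  "step Q w t S v =
     (let ((live, prm, tau), alpha) = w in
      fold (inform Q (\<lambda>X. alpha (X, v)) t) (informs live prm S t v) (S v))"

fun run :: "gaps \<Rightarrow> 'v set \<Rightarrow> 'v set \<Rightarrow> 'v world \<Rightarrow> nat \<Rightarrow> 'v gstate" where
  "run Q SA SB w 0 = seed_state SA SB (snd (snd (fst w)))"
| "run Q SA SB w (Suc t) = step Q w (Suc t) (run Q SA SB w t)"

definition final_state :: "gaps \<Rightarrow> 'v set \<Rightarrow> 'v set \<Rightarrow> 'v world \<Rightarrow> 'v gstate" where
  "final_state Q SA SB w =
     run Q SA SB w (LEAST t. run Q SA SB w (Suc t) = run Q SA SB w t)"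

definition in_nbrs :: "('v \<times> 'v) set \<Rightarrow> 'v \<Rightarrow> 'v set" where
  "in_nbrs E v = {u. (u, v) \<in> E}"

definition dworld_pmf :: "('v::finite \<times> 'v) set \<Rightarrow> ('v \<times> 'v \<Rightarrow> real) \<Rightarrow> 'v dworld pmf" where
  "dworld_pmf E p =
     pair_pmf (Pi_pmf E False (\<lambda>e. bernoulli_pmf (p e)))
       (pair_pmf (Pi_pmf UNIV [] (\<lambda>v. pmf_of_set (permutations_of_set (in_nbrs E v))))
                 (Pi_pmf UNIV IA (\<lambda>v. pmf_of_set {IA, IB})))"

definition world_measure :: "('v::finite \<times> 'v) set \<Rightarrow> ('v \<times> 'v \<Rightarrow> real) \<Rightarrow> 'v world measure" where
  "world_measure E p =
     measure_pmf (dworld_pmf E p) \<Otimes>\<^sub>M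
       (\<Pi>\<^sub>M i\<in>(UNIV :: (item \<times> 'v) set). uniform_measure lborel {0..1})"

definition sigmaA :: "('v::finite \<times> 'v) set \<Rightarrow> ('v \<times> 'v \<Rightarrow> real) \<Rightarrow> gaps \<Rightarrow> 'v set \<Rightarrow> 'v set \<Rightarrow> real" where
  "sigmaA E p Q SA SB =
     (\<integral>w. real (card {v. st (final_state Q SA SB w v) IA = Adopted}) \<partial>world_measure E p)"

definition submodular :: "('a set \<Rightarrow> real) \<Rightarrow> bool" where
  "submodular f \<longleftrightarrow>
     (\<forall>S T x. S \<subseteq> T \<and> x \<notin> T \<longrightarrow> f (insert x S) - f S \<ge> f (insert x T) - f T)"

end

theory Submission
  imports Defs
begin

text \<open>Fix a world (live edges, permutations, coins and thresholds). With \<open>q_{A|\<emptyset>} = q_{B|\<emptyset>} = 1\<close>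
  no item is ever suspended, and replacing every \<open>B\<close>-threshold by \<open>0\<close> does not change which
  nodes adopt \<open>A\<close>. Once \<open>B\<close> is always accepted, its diffusion does not depend on \<open>A\<close>, and whether
  a node adopts \<open>A\<close> depends only on how early \<open>A\<close> reaches it relative to \<open>B\<close>. Enlarging the
  \<open>A\<close>-seed set only makes \<open>A\<close> arrive earlier, and under \<open>S \<union> T\<close> the arrival of \<open>A\<close> at an
  adopter is its arrival under \<open>S\<close> or under \<open>T\<close>. So the \<open>A\<close>-adopters depend on the seed set
  through a union-preserving map, their number is a coverage function, hence submodular, and
  submodularity is preserved by taking expectations.\<close>

lemma other_other [simp]: "other (other X) = X"
  by (cases X) auto

lemma other_neq [simp]: "other X \<noteq> X" "X \<noteq> other X"
  by (cases X; simp)+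

lemma eq_other_if_neq: "Y \<noteq> X \<Longrightarrow> Y = other X"
  by (cases X; cases Y) auto

lemma UNIV_item: "(UNIV :: item set) = {IA, IB}"
  using item.exhaust by auto

instance item :: finite
  by standard (simp add: UNIV_item)

lemma st_adopt [simp]: "st (adopt t X s) = (st s)(X := Adopted)"
  by (simp add: adopt_def)

lemma atime_adopt [simp]: "atime (adopt t X s) = (atime s)(X := Some t)"
  by (simp add: adopt_def)

lemma aord_adopt [simp]: "aord (adopt t X s) = aord s @ [X]"
  by (simp add: adopt_def)

lemma st_set_status [simp]: "st (set_status X c s) = (st s)(X := c)"
  by (simp add: set_status_def)

lemma atime_set_status [simp]: "atime (set_status X c s) = atime s"
  by (simp add: set_status_def)

lemma aord_set_status [simp]: "aord (set_status X c s) = aord s"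
  by (simp add: set_status_def)

section \<open>Termination of the diffusion\<close>

lemma st_inform_nonidle: "st s Z \<noteq> Idle \<Longrightarrow> st (inform Q al t X s) Z \<noteq> Idle"
  unfolding inform_def adopt_recons_def Let_def by auto

lemma st_inform_informed: "st (inform Q al t X s) X \<noteq> Idle"
  unfolding inform_def adopt_recons_def Let_def by auto

lemma st_fold_inform_nonidle: "st s Z \<noteq> Idle \<Longrightarrow> st (fold (inform Q al t) L s) Z \<noteq> Idle"
  by (induction L arbitrary: s) (auto simp: st_inform_nonidle)

lemma st_fold_inform_informed: "X \<in> set L \<Longrightarrow> st (fold (inform Q al t) L s) X \<noteq> Idle"
  by (induction L arbitrary: s) (auto simp: st_inform_informed st_fold_inform_nonidle)

lemma inform_unchanged_if_nonidle: "st s X \<noteq> Idle \<Longrightarrow> inform Q al t X s = s"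
  unfolding inform_def by simp

lemma fold_inform_changed:
  assumes "fold (inform Q al t) L s \<noteq> s"
  shows "\<exists>X. st s X = Idle \<and> st (fold (inform Q al t) L s) X \<noteq> Idle"
  using assms
proof (induction L arbitrary: s)
  case (Cons X L)
  show ?case
  proof (cases "st s X = Idle")
    case True
    then show ?thesis
      using st_inform_informed st_fold_inform_nonidle by (metis fold_simps(2))
  next
    case False
    then show ?thesis using Cons by (simp add: inform_unchanged_if_nonidle)
  qed
qed simp

lemma atime_inform: "atime (inform Q al t X s) Y \<in> {atime s Y, Some t}"
  unfolding inform_def adopt_recons_def Let_def by auto

lemma atime_fold_inform: "atime (fold (inform Q al t) L s) Y \<in> {atime s Y, Some t}"
proof (induction L arbitrary: s)
  case (Cons X L)
  have "atime (inform Q al t X s) Y \<in> {atime s Y, Some t}"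
    by (rule atime_inform)
  moreover have "atime (fold (inform Q al t) L (inform Q al t X s)) Y \<in> {atime (inform Q al t X s) Y, Some t}"
    by (rule Cons.IH)
  ultimately show ?case by auto
qed simp

definition new_items :: "nat \<Rightarrow> nstate \<Rightarrow> item list" where
  "new_items t s = filter (\<lambda>X. atime s X = Some t) (aord s)"

lemma run_Suc_eq:
  "run Q SA SB ((live, prm, tau), alpha) (Suc t) v =
     fold (inform Q (\<lambda>X. alpha (X, v)) (Suc t))
       (concat (map (\<lambda>u. if live (u, v) then new_items t (run Q SA SB ((live, prm, tau), alpha) t u) else [])
         (prm v)))
       (run Q SA SB ((live, prm, tau), alpha) t v)"
  unfolding run.simps step_def informs_def new_items_def diff_Suc_1 by simp

declare run.simps(2) [simp del]

lemma run_atime_le: "atime (run Q SA SB w t v) X = Some k \<Longrightarrow> k \<le> t"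
proof (induction t arbitrary: v k)
  case 0
  then show ?case by (auto simp: seed_state_def init_node_def split: if_splits)
next
  case (Suc t)
  obtain live prm tau alpha where w: "w = ((live, prm, tau), alpha)" by (metis prod.exhaust)
  have "atime (run Q SA SB w (Suc t) v) X \<in> {atime (run Q SA SB w t v) X, Some (Suc t)}"
    unfolding w run_Suc_eq by (rule atime_fold_inform)
  then show ?case
    using Suc.IH Suc.prems by (metis insertE le_SucI option.inject order_refl singletonD)
qed

lemma run_stable_Suc:
  assumes "run Q SA SB w (Suc t) = run Q SA SB w t"
  shows "run Q SA SB w (Suc (Suc t)) = run Q SA SB w (Suc t)"
proof -
  obtain live prm tau alpha where w: "w = ((live, prm, tau), alpha)" by (metis prod.exhaust)
  have nothing_new: "new_items (Suc t) (run Q SA SB w (Suc t) u) = []" for u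
    unfolding new_items_def assms using run_atime_le[of Q SA SB w t] by (force simp: filter_empty_conv)
  show ?thesis
  proof
    fix v
    show "run Q SA SB w (Suc (Suc t)) v = run Q SA SB w (Suc t) v"
      unfolding w run_Suc_eq[where t = "Suc t"]
      by (simp only: nothing_new[unfolded w] if_cancel map_replicate_const concat_replicate_trivial fold_simps(1))
  qed
qed

lemma run_stable_add:
  assumes "run Q SA SB w (Suc t) = run Q SA SB w t"
  shows "run Q SA SB w (t + k) = run Q SA SB w t"
proof -
  have "run Q SA SB w (Suc (t + k)) = run Q SA SB w (t + k)" for k
  proof (induction k)
    case (Suc k)
    then show ?case using run_stable_Suc by (metis add_Suc_right)
  qed (use assms in simp)
  then show ?thesis
    by (induction k) (simp_all del: run.simps)
qed

definition nonidle_pairs :: "'v gstate \<Rightarrow> ('v \<times> item) set" where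
  "nonidle_pairs S = {(v, X). st (S v) X \<noteq> Idle}"

lemma card_nonidle_pairs_le: "card (nonidle_pairs (S :: 'v::finite gstate)) \<le> 2 * CARD('v)"
proof -
  have "card (nonidle_pairs S) \<le> card ((UNIV :: 'v set) \<times> {IA, IB})"
    by (rule card_mono) (auto simp flip: UNIV_item)
  then show ?thesis by (simp add: card_cartesian_product)
qed

lemma nonidle_pairs_run_psubset:
  assumes "run Q SA SB w (Suc t) \<noteq> run Q SA SB w t"
  shows "nonidle_pairs (run Q SA SB w t) \<subset> nonidle_pairs (run Q SA SB w (Suc t))"
proof -
  obtain live prm tau alpha where w: "w = ((live, prm, tau), alpha)" by (metis prod.exhaust)
  have sub: "nonidle_pairs (run Q SA SB w t) \<subseteq> nonidle_pairs (run Q SA SB w (Suc t))"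
    unfolding nonidle_pairs_def w run_Suc_eq by (auto dest: st_fold_inform_nonidle)
  obtain v where "run Q SA SB w (Suc t) v \<noteq> run Q SA SB w t v"
    using assms by auto
  then obtain X where "st (run Q SA SB w t v) X = Idle" "st (run Q SA SB w (Suc t) v) X \<noteq> Idle"
    using fold_inform_changed unfolding w run_Suc_eq by blast
  then show ?thesis
    using sub unfolding nonidle_pairs_def by auto
qed

text \<open>Every change of the global state makes some node non-idle for some item, which can happen
  at most \<open>2 * CARD('v)\<close> times.\<close>

lemma run_stabilises:
  "\<exists>t \<le> 2 * CARD('v). run Q SA SB (w :: 'v::finite world) (Suc t) = run Q SA SB w t"
proof (rule ccontr)
  assume "\<not> ?thesis"
  then have changing: "t \<le> 2 * CARD('v) \<Longrightarrow> run Q SA SB w (Suc t) \<noteq> run Q SA SB w t" for t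
    by auto
  have "t \<le> card (nonidle_pairs (run Q SA SB w t))" if "t \<le> Suc (2 * CARD('v))" for t
    using that
  proof (induction t)
    case (Suc t)
    then have "nonidle_pairs (run Q SA SB w t) \<subset> nonidle_pairs (run Q SA SB w (Suc t))"
      by (intro nonidle_pairs_run_psubset changing) simp
    then have "card (nonidle_pairs (run Q SA SB w t)) < card (nonidle_pairs (run Q SA SB w (Suc t)))"
      by (intro psubset_card_mono) auto
    then show ?case using Suc by simp
  qed simp
  from this[of "Suc (2 * CARD('v))"] card_nonidle_pairs_le[of "run Q SA SB w _"] show False
    by (metis not_less_eq_eq order_refl order_trans)
qed

lemma final_state_eq_run: "final_state Q SA SB (w :: 'v::finite world) = run Q SA SB w (2 * CARD('v))"
proof -
  let ?N = "2 * CARD('v)" and ?L = "LEAST t. run Q SA SB w (Suc t) = run Q SA SB w t"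
  obtain t0 where t0: "t0 \<le> ?N" "run Q SA SB w (Suc t0) = run Q SA SB w t0"
    using run_stabilises by blast
  have L: "run Q SA SB w (Suc ?L) = run Q SA SB w ?L"
    using t0(2) by (rule LeastI)
  have "?L \<le> ?N"
    using Least_le[of _ t0] t0 by fastforce
  then have "run Q SA SB w ?N = run Q SA SB w ?L"
    using run_stable_add[OF L, of "?N - ?L"] by simp
  then show ?thesis
    unfolding final_state_def by simp
qed

section \<open>Consistent node states\<close>

definition node_consistent :: "gaps \<Rightarrow> (item \<Rightarrow> real) \<Rightarrow> nstate \<Rightarrow> bool" where
  "node_consistent Q al s \<longleftrightarrow> (\<forall>X. st s X \<noteq> Suspended) \<and>
     (\<forall>X. st s X = Rejected \<longrightarrow> st s (other X) = Adopted \<and> \<not> al X \<le> q_cond Q X) \<and>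
     set (aord s) = {X. st s X = Adopted} \<and> distinct (aord s) \<and>
     (\<forall>X. atime s X = None \<longleftrightarrow> st s X \<noteq> Adopted)"

lemma inform_eq_if_accepted:
  assumes "node_consistent Q al s" "al X \<le> q_none Q X"
  shows "inform Q al t X s =
    (if st s X \<noteq> Idle then s
     else if st s (other X) = Adopted \<and> \<not> al X \<le> q_cond Q X then set_status X Rejected s
     else adopt t X s)"
  using assms unfolding inform_def adopt_recons_def node_consistent_def Let_def by auto

lemma node_consistent_inform:
  assumes "node_consistent Q al s" "\<forall>X. al X \<le> q_none Q X"
  shows "node_consistent Q al (inform Q al t X s)"
  using assms unfolding inform_eq_if_accepted[OF assms(1) assms(2)[rule_format]]
  by (auto simp: node_consistent_def)

lemma node_consistent_fold_inform:
  "node_consistent Q al s \<Longrightarrow> \<forall>X. al X \<le> q_none Q X \<Longrightarrow> node_consistent Q al (fold (inform Q al t) L s)"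
  by (induction L arbitrary: s) (simp_all add: node_consistent_inform)

locale no_suspension =
  fixes Q :: gaps and al :: "item \<Rightarrow> real"
  assumes al_le_q_none: "\<forall>X. al X \<le> q_none Q X"
begin

lemma inform_eq:
  "node_consistent Q al s \<Longrightarrow> inform Q al t X s =
    (if st s X \<noteq> Idle then s
     else if st s (other X) = Adopted \<and> \<not> al X \<le> q_cond Q X then set_status X Rejected s
     else adopt t X s)"
  using inform_eq_if_accepted al_le_q_none by blast

lemma consistent_inform: "node_consistent Q al s \<Longrightarrow> node_consistent Q al (inform Q al t X s)"
  using node_consistent_inform al_le_q_none by blast

lemma consistent_fold_inform: "node_consistent Q al s \<Longrightarrow> node_consistent Q al (fold (inform Q al t) L s)"
  using node_consistent_fold_inform al_le_q_none by blast

end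

locale B_accepted = no_suspension +
  assumes accepts_B: "al IB \<le> q_cond Q IB"
begin

lemma inform_B_eq: "node_consistent Q al s \<Longrightarrow> inform Q al t IB s = (if st s IB \<noteq> Idle then s else adopt t IB s)"
  using inform_eq[of s t IB] accepts_B by simp

lemma inform_A_eq:
  "node_consistent Q al s \<Longrightarrow> inform Q al t IA s =
    (if st s IA \<noteq> Idle then s
     else if st s IB = Adopted \<and> \<not> al IA \<le> q_cond Q IA then set_status IA Rejected s
     else adopt t IA s)"
  using inform_eq[of s t IA] by simp

end

lemma node_consistent_seed_state: "node_consistent Q al (seed_state SA SB tau v)"
  unfolding node_consistent_def seed_state_def init_node_def
  by (cases "tau v") auto

lemma st_eq_Adopted_iff:
  "node_consistent Q al s \<Longrightarrow> st s X = Adopted \<longleftrightarrow> atime s X \<noteq> None"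
  unfolding node_consistent_def by auto

lemma adopted_if_nonidle:
  "node_consistent Q al s \<Longrightarrow> st s X \<noteq> Idle \<Longrightarrow> st s X = Adopted \<or> st s (other X) = Adopted"
  unfolding node_consistent_def by (cases "st s X") auto

lemma aord_cases:
  assumes "node_consistent Q al s"
  obtains "aord s = []" | X where "aord s = [X]" | X where "aord s = [X, other X]"
proof -
  have distinct: "distinct (aord s)"
    using assms unfolding node_consistent_def by simp
  have "length (aord s) = card (set (aord s))"
    using distinct by (rule distinct_card[symmetric])
  also have "\<dots> \<le> card {IA, IB}"
    by (rule card_mono) (auto simp flip: UNIV_item)
  finally have length: "length (aord s) \<le> 2"
    by simp
  show ?thesis
  proof (cases "aord s")
    case (Cons X xs)
    show ?thesis
    proof (cases xs)
      case (Cons Y ys)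
      then have "ys = []" "Y = other X"
        using \<open>aord s = X # xs\<close> length distinct eq_other_if_neq by auto
      then show ?thesis
        using that(3) \<open>aord s = X # xs\<close> Cons by simp
    qed (use that(2) Cons in simp)
  qed (use that(1) in simp)
qed

lemma aord_eq_single:
  assumes "node_consistent Q al s" "st s X = Adopted" "st s (other X) \<noteq> Adopted"
  shows "aord s = [X]"
proof -
  have mem: "Y \<in> set (aord s) \<longleftrightarrow> Y = X" for Y
    using assms eq_other_if_neq unfolding node_consistent_def by auto
  from assms(1) show ?thesis
  proof (cases rule: aord_cases)
    case 1
    then show ?thesis using mem[of X] by simp
  next
    case (2 Y)
    then show ?thesis using mem[of X] by simp
  next
    case (3 Y)
    then show ?thesis using mem[of Y] mem[of "other Y"] by simp
  qed
qed

lemma aord_eq_Nil: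
  assumes "node_consistent Q al s" "st s IA \<noteq> Adopted" "st s IB \<noteq> Adopted"
  shows "aord s = []"
proof -
  have "Y \<notin> set (aord s)" for Y
    using assms unfolding node_consistent_def by (cases Y) auto
  then show ?thesis
    by (cases "aord s") auto
qed

lemma new_items_cases:
  assumes "node_consistent Q al s"
  shows "new_items t s =
    (if atime s IA = Some t then
       (if atime s IB = Some t then (if aord s = [IB, IA] then [IB, IA] else [IA, IB]) else [IA])
     else if atime s IB = Some t then [IB] else [])"
proof -
  have mem: "X \<in> set (aord s) \<longleftrightarrow> atime s X \<noteq> None" for X
    using assms unfolding node_consistent_def by auto
  from assms show ?thesis
  proof (cases rule: aord_cases)
    case 1
    then show ?thesis using mem by (simp add: new_items_def)
  next
    case (2 X)
    then have "atime s (other X) = None"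
      using mem[of "other X"] by auto
    then show ?thesis using 2 by (cases X) (auto simp: new_items_def)
  next
    case (3 X)
    then show ?thesis by (cases X) (auto simp: new_items_def)
  qed
qed

lemma node_consistent_run:
  assumes "\<forall>X v. alpha (X, v) \<le> q_none Q X"
  shows "node_consistent Q (\<lambda>X. alpha (X, v)) (run Q SA SB ((live, prm, tau), alpha) t v)"
  using assms
  by (induction t arbitrary: v) (simp_all add: node_consistent_seed_state node_consistent_fold_inform run_Suc_eq)

lemma run_informed:
  assumes "\<forall>X v. alpha (X, v) \<le> q_none Q X" and "live (u, v)" "u \<in> set (prm v)"
  shows "atime (run Q SA SB ((live, prm, tau), alpha) t u) X = Some k \<Longrightarrow> k < t \<Longrightarrow>
    st (run Q SA SB ((live, prm, tau), alpha) t v) X \<noteq> Idle"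
proof (induction t arbitrary: k)
  case (Suc t)
  let ?R = "run Q SA SB ((live, prm, tau), alpha)"
  have "atime (?R (Suc t) u) X \<in> {atime (?R t u) X, Some (Suc t)}"
    unfolding run_Suc_eq by (rule atime_fold_inform)
  then have k: "atime (?R t u) X = Some k"
    using Suc.prems by auto
  show ?case
  proof (cases "k < t")
    case True
    then have "st (?R t v) X \<noteq> Idle"
      using Suc.IH k by blast
    then show ?thesis
      unfolding run_Suc_eq by (rule st_fold_inform_nonidle)
  next
    case False
    have nc: "node_consistent Q (\<lambda>Y. alpha (Y, u)) (?R t u)"
      by (rule node_consistent_run[OF assms(1)])
    then have "st (?R t u) X = Adopted"
      using k st_eq_Adopted_iff[OF nc, of X] by simp
    then have "X \<in> set (aord (?R t u))"
      using nc unfolding node_consistent_def by auto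
    moreover have "k = t"
      using False Suc.prems by simp
    ultimately have "X \<in> set (new_items t (?R t u))"
      using k by (simp add: new_items_def)
    then have "X \<in> set (concat (map (\<lambda>u. if live (u, v) then new_items t (?R t u) else []) (prm v)))"
      using assms(2,3) by force
    then show ?thesis
      unfolding run_Suc_eq by (rule st_fold_inform_informed)
  qed
qed simp

lemma run_informed_before:
  assumes "\<forall>X v. alpha (X, v) \<le> q_none Q X" and "live (u, v)" "u \<in> set (prm v)"
    and "atime (run Q SA SB ((live, prm, tau), alpha) t u) X \<notin> {None, Some t}"
  shows "st (run Q SA SB ((live, prm, tau), alpha) t v) X \<noteq> Idle"
proof -
  obtain k where "atime (run Q SA SB ((live, prm, tau), alpha) t u) X = Some k" "k < t"
    using assms(4) run_atime_le by (metis insertI1 insertI2 le_neq_implies_less option.exhaust)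
  then show ?thesis
    by (rule run_informed[where alpha = alpha and Q = Q and live = live and prm = prm, OF assms(1-3)])
qed

section \<open>Relaxing the \<open>B\<close>-thresholds\<close>

text \<open>Compare a run with one in which every \<open>B\<close>-threshold is replaced by \<open>0\<close>. The two can
  differ only at nodes that have already adopted \<open>A\<close> and adopt \<open>B\<close> afterwards in one run only.
  Such an extra \<open>B\<close> reaches each neighbour no earlier than the \<open>A\<close> sent by the same node, so it
  never finds the neighbour \<open>A\<close>-idle.\<close>

definition B_after_A :: "nstate \<Rightarrow> nstate \<Rightarrow> bool" where
  "B_after_A s m \<longleftrightarrow> st m IA = Adopted \<and> (st m IB = Idle \<or> (st m IB = Adopted \<and> aord m = [IA, IB])) \<and>
     (st s IB = Adopted \<longrightarrow> aord s = [IA, IB])"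

definition agrees_on_A :: "nstate \<Rightarrow> nstate \<Rightarrow> bool" where
  "agrees_on_A s m \<longleftrightarrow> st s IA = st m IA \<and> atime s IA = atime m IA \<and> (s = m \<or> B_after_A s m)"

lemma agrees_on_A_refl [simp]: "agrees_on_A s s"
  unfolding agrees_on_A_def by simp

locale B_relaxation = orig: no_suspension Q alr + relaxed: B_accepted Q alm for Q alr alm +
  assumes same_A_threshold: "alm IA = alr IA"
begin

lemma agrees_on_A_inform_A:
  assumes rel: "agrees_on_A s m" and n: "node_consistent Q alr s" "node_consistent Q alm m"
  shows "agrees_on_A (inform Q alr t IA s) (inform Q alm t IA m)"
proof (cases "s = m")
  case True
  then show ?thesis
    using same_A_threshold orig.inform_eq[OF n(1)] relaxed.inform_A_eq[OF n(2)] by simp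
next
  case False
  with rel have "st s IA \<noteq> Idle" "st m IA \<noteq> Idle"
    unfolding agrees_on_A_def B_after_A_def by auto
  then show ?thesis
    using rel by (simp add: inform_unchanged_if_nonidle)
qed

lemma agrees_on_A_inform_B:
  assumes rel: "agrees_on_A s m" and n: "node_consistent Q alr s" "node_consistent Q alm m"
  shows "agrees_on_A (inform Q alr t IB s) (inform Q alm t IB m)"
proof (cases "s = m")
  case True
  show ?thesis
  proof (cases "st s IB = Idle \<and> st s IA = Adopted \<and> \<not> alr IB \<le> q_cond Q IB")
    case rejected: True
    then have "aord m = [IA]"
      using aord_eq_single[OF n(2), of IA] True by auto
    then show ?thesis
      using rejected True orig.inform_eq[OF n(1)] relaxed.inform_B_eq[OF n(2)]
      unfolding agrees_on_A_def B_after_A_def by auto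
  qed (use True orig.inform_eq[OF n(1)] relaxed.inform_B_eq[OF n(2)] in auto)
next
  case False
  then have after: "B_after_A s m" "st s IA = st m IA" "atime s IA = atime m IA"
    using rel unfolding agrees_on_A_def by auto
  then have "st m IB \<noteq> Adopted \<Longrightarrow> aord m = [IA]" "st s IB \<noteq> Adopted \<Longrightarrow> aord s = [IA]"
    using aord_eq_single[OF n(2), of IA] aord_eq_single[OF n(1), of IA] unfolding B_after_A_def by auto
  then show ?thesis
    using after orig.inform_eq[OF n(1)] relaxed.inform_B_eq[OF n(2)]
    unfolding agrees_on_A_def B_after_A_def by auto
qed

lemma agrees_on_A_inform:
  "agrees_on_A s m \<Longrightarrow> node_consistent Q alr s \<Longrightarrow> node_consistent Q alm m \<Longrightarrow>
    agrees_on_A (inform Q alr t X s) (inform Q alm t X m)"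
  by (cases X) (simp_all add: agrees_on_A_inform_A agrees_on_A_inform_B)

lemma agrees_on_A_inform_B_left:
  assumes rel: "agrees_on_A s m" and n: "node_consistent Q alr s" "node_consistent Q alm m"
    and nonidle: "st s IA \<noteq> Idle"
  shows "agrees_on_A (inform Q alr t IB s) m"
proof (cases "st s IB = Idle")
  case True
  then have adopted: "st s IA = Adopted"
    using adopted_if_nonidle[OF n(1) nonidle] by simp
  then have "aord s = [IA]"
    using aord_eq_single[OF n(1) adopted] True by simp
  moreover have "st m IA = Adopted" "atime s IA = atime m IA"
    "st m IB = Idle \<or> (st m IB = Adopted \<and> aord m = [IA, IB])"
    using rel adopted True unfolding agrees_on_A_def B_after_A_def by auto
  ultimately show ?thesis
    using True adopted orig.inform_eq[OF n(1)] unfolding agrees_on_A_def B_after_A_def by auto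
qed (use rel in \<open>simp add: inform_unchanged_if_nonidle\<close>)

lemma agrees_on_A_inform_B_right:
  assumes rel: "agrees_on_A s m" and n: "node_consistent Q alr s" "node_consistent Q alm m"
    and nonidle: "st m IA \<noteq> Idle"
  shows "agrees_on_A s (inform Q alm t IB m)"
proof (cases "st m IB = Idle")
  case True
  then have adopted: "st m IA = Adopted"
    using adopted_if_nonidle[OF n(2) nonidle] by simp
  then have "aord m = [IA]"
    using aord_eq_single[OF n(2) adopted] True by simp
  moreover have "st s IA = Adopted" "atime s IA = atime m IA" "st s IB = Adopted \<longrightarrow> aord s = [IA, IB]"
    using rel adopted True unfolding agrees_on_A_def B_after_A_def by auto
  ultimately show ?thesis
    using True adopted relaxed.inform_B_eq[OF n(2)] unfolding agrees_on_A_def B_after_A_def by auto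
qed (use rel in \<open>simp add: inform_unchanged_if_nonidle\<close>)

lemma agrees_on_A_fold_inform:
  "agrees_on_A s m \<Longrightarrow> node_consistent Q alr s \<Longrightarrow> node_consistent Q alm m \<Longrightarrow>
    agrees_on_A (fold (inform Q alr t) L s) (fold (inform Q alm t) L m)"
proof (induction L arbitrary: s m)
  case (Cons X L)
  then show ?case
    using agrees_on_A_inform orig.consistent_inform relaxed.consistent_inform by simp
qed simp

lemma agrees_on_A_fold_B:
  assumes rel: "agrees_on_A s m" and n: "node_consistent Q alr s" "node_consistent Q alm m"
    and nonidle: "st s IA \<noteq> Idle" and "L1 \<in> {[], [IB]}" "L2 \<in> {[], [IB]}"
  shows "agrees_on_A (fold (inform Q alr t) L1 s) (fold (inform Q alm t) L2 m)"
proof -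
  have "st m IA \<noteq> Idle"
    using rel nonidle unfolding agrees_on_A_def by simp
  then show ?thesis
    using \<open>L1 \<in> {[], [IB]}\<close> \<open>L2 \<in> {[], [IB]}\<close> rel agrees_on_A_inform[OF rel n]
      agrees_on_A_inform_B_left[OF rel n nonidle] agrees_on_A_inform_B_right[OF rel n]
    by auto
qed

lemma agrees_on_A_new_items:
  assumes rel: "agrees_on_A s m" and n: "node_consistent Q alr s" "node_consistent Q alm m"
    and rel_u: "agrees_on_A su mu" and n_u: "node_consistent Q a1 su" "node_consistent Q a2 mu"
    and informed: "atime su IA \<notin> {None, Some t} \<Longrightarrow> st s IA \<noteq> Idle"
  shows "agrees_on_A (fold (inform Q alr t') (new_items t su) s) (fold (inform Q alm t') (new_items t mu) m)"
proof (cases "su = mu")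
  case True
  then show ?thesis using agrees_on_A_fold_inform[OF rel n] by simp
next
  case False
  then have after: "B_after_A su mu" and same_time: "atime su IA = atime mu IA"
    using rel_u unfolding agrees_on_A_def by auto
  then have adopted: "st su IA = Adopted" "st mu IA = Adopted"
    using rel_u unfolding agrees_on_A_def B_after_A_def by auto
  have aord_su: "aord su \<in> {[IA], [IA, IB]}" and aord_mu: "aord mu \<in> {[IA], [IA, IB]}"
    using aord_eq_single[OF n_u(1) adopted(1)] aord_eq_single[OF n_u(2) adopted(2)] after
    unfolding B_after_A_def by auto
  let ?B = "\<lambda>u. filter (\<lambda>X. atime u X = Some t) (filter (\<lambda>X. X = IB) (aord u))"
  have split: "new_items t u = (if atime u IA = Some t then IA # ?B u else ?B u)"
    if "aord u \<in> {[IA], [IA, IB]}" for u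
    using that unfolding new_items_def by auto
  have B_items: "?B su \<in> {[], [IB]}" "?B mu \<in> {[], [IB]}"
    using aord_su aord_mu by auto
  show ?thesis
  proof (cases "atime su IA = Some t")
    case True
    have "agrees_on_A (inform Q alr t' IA s) (inform Q alm t' IA m)"
      by (rule agrees_on_A_inform[OF rel n])
    moreover have "node_consistent Q alr (inform Q alr t' IA s)" "node_consistent Q alm (inform Q alm t' IA m)"
      using n orig.consistent_inform relaxed.consistent_inform by auto
    ultimately show ?thesis
      using agrees_on_A_fold_B[OF _ _ _ st_inform_informed B_items] True same_time
      unfolding split[OF aord_su] split[OF aord_mu] by simp
  next
    case False
    moreover have "atime su IA \<noteq> None"
      using st_eq_Adopted_iff[OF n_u(1)] adopted(1) by simp
    ultimately show ?thesis
      using agrees_on_A_fold_B[OF rel n informed B_items] same_time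
      unfolding split[OF aord_su] split[OF aord_mu] by simp
  qed
qed

lemma agrees_on_A_deliver:
  assumes "agrees_on_A s m" "node_consistent Q alr s" "node_consistent Q alm m"
    and "\<forall>u\<in>set us. agrees_on_A (R u) (M u) \<and> node_consistent Q (ar u) (R u) \<and> node_consistent Q (am u) (M u)"
    and "\<forall>u\<in>set us. lv u \<longrightarrow> atime (R u) IA \<notin> {None, Some t} \<longrightarrow> st s IA \<noteq> Idle"
  shows "agrees_on_A (fold (inform Q alr t') (concat (map (\<lambda>u. if lv u then new_items t (R u) else []) us)) s)
                     (fold (inform Q alm t') (concat (map (\<lambda>u. if lv u then new_items t (M u) else []) us)) m)"
  using assms
proof (induction us arbitrary: s m)
  case (Cons u us)
  let ?s = "fold (inform Q alr t') (if lv u then new_items t (R u) else []) s"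
  let ?m = "fold (inform Q alm t') (if lv u then new_items t (M u) else []) m"
  have "agrees_on_A ?s ?m"
    using agrees_on_A_new_items[OF Cons.prems(1-3), of "R u" "M u" "ar u" "am u" t t'] Cons.prems(1,4,5)
    by simp
  moreover have "node_consistent Q alr ?s" "node_consistent Q alm ?m"
    using Cons.prems(2,3) orig.consistent_fold_inform relaxed.consistent_fold_inform by auto
  moreover have "\<forall>u\<in>set us. lv u \<longrightarrow> atime (R u) IA \<notin> {None, Some t} \<longrightarrow> st ?s IA \<noteq> Idle"
    using Cons.prems(5) st_fold_inform_nonidle by (metis list.set_intros(2))
  ultimately show ?case
    using Cons.IH Cons.prems(4) by simp
qed simp

end

lemma agrees_on_A_run:
  assumes alpha_le: "\<forall>X v. alpha (X, v) \<le> q_none Q X" and alpham_le: "\<forall>X v. alpham (X, v) \<le> q_none Q X"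
    and same_A: "\<forall>v. alpham (IA, v) = alpha (IA, v)" and accept_B: "\<forall>v. alpham (IB, v) \<le> q_cond Q IB"
  shows "agrees_on_A (run Q SA SB ((live, prm, tau), alpha) t v) (run Q SA SB ((live, prm, tau), alpham) t v)"
proof (induction t arbitrary: v)
  case (Suc t)
  let ?R = "run Q SA SB ((live, prm, tau), alpha) t" and ?M = "run Q SA SB ((live, prm, tau), alpham) t"
  interpret B_relaxation Q "\<lambda>X. alpha (X, v)" "\<lambda>X. alpham (X, v)"
    by unfold_locales (use alpha_le alpham_le same_A accept_B in auto)
  have consistent: "node_consistent Q (\<lambda>X. alpha (X, u)) (?R u)" "node_consistent Q (\<lambda>X. alpham (X, u)) (?M u)" for u
    using node_consistent_run[where alpha = alpha, OF alpha_le] node_consistent_run[where alpha = alpham, OF alpham_le]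
    by blast+
  have "st (?R v) IA \<noteq> Idle" if "u \<in> set (prm v)" "live (u, v)" "atime (?R u) IA \<notin> {None, Some t}" for u
    using run_informed_before[where alpha = alpha, OF alpha_le that(2,1,3)] .
  then show ?case
    unfolding run_Suc_eq using Suc.IH consistent by (intro agrees_on_A_deliver) auto
qed simp

section \<open>Monotone arrival of \<open>A\<close>\<close>

text \<open>When every node adopts \<open>B\<close> as soon as it is informed of it, the diffusion of \<open>B\<close> does not
  depend on \<open>A\<close>, and whether a node adopts \<open>A\<close> depends only on when \<open>A\<close> arrives relative to
  \<open>B\<close>. \<open>A_rank\<close> orders these arrivals, an arrival in the same step as \<open>B\<close> but after it
  counting as later.\<close>

definition B_first_flag :: "nstate \<Rightarrow> nat" where
  "B_first_flag s = (if st s IB = Adopted \<and> atime s IB = atime s IA \<and> aord s = [IB, IA] then 1 else 0)"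

definition A_rank :: "nstate \<Rightarrow> enat" where
  "A_rank s = (if st s IA = Adopted then enat (2 * the (atime s IA) + B_first_flag s) else \<infinity>)"

definition same_B :: "nstate \<Rightarrow> nstate \<Rightarrow> bool" where
  "same_B s1 s2 \<longleftrightarrow> st s1 IB = st s2 IB \<and> atime s1 IB = atime s2 IB"

definition earlier_A :: "nstate \<Rightarrow> nstate \<Rightarrow> bool" where
  "earlier_A s1 s2 \<longleftrightarrow> same_B s1 s2 \<and> A_rank s1 \<le> A_rank s2 \<and> (st s1 IA = Idle \<longrightarrow> st s2 IA = Idle) \<and>
     (st s1 IA = Rejected \<longrightarrow> st s2 IA \<noteq> Adopted)"

lemma earlier_A_refl [simp]: "earlier_A s s"
  unfolding earlier_A_def same_B_def by simp

lemma A_rank_eq_infinity_iff: "A_rank s = \<infinity> \<longleftrightarrow> st s IA \<noteq> Adopted"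
  unfolding A_rank_def by simp

lemma eq_if_A_idle:
  assumes n: "node_consistent Q al s1" "node_consistent Q al' s2" and B: "same_B s1 s2"
    and idle: "st s1 IA = Idle" "st s2 IA = Idle"
  shows "s1 = s2"
proof (intro nstate.equality)
  show "st s1 = st s2"
  proof
    fix X show "st s1 X = st s2 X"
      using B idle unfolding same_B_def by (cases X) auto
  qed
  show "atime s1 = atime s2"
  proof
    fix X show "atime s1 X = atime s2 X"
      using B idle st_eq_Adopted_iff[OF n(1), of IA] st_eq_Adopted_iff[OF n(2), of IA]
      unfolding same_B_def by (cases X) auto
  qed
  show "aord s1 = aord s2"
    using aord_eq_single[OF n(1), of IB] aord_eq_single[OF n(2), of IB] aord_eq_Nil[OF n(1)] aord_eq_Nil[OF n(2)]
      B idle unfolding same_B_def by (cases "st s1 IB = Adopted") simp_all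
qed simp

lemma A_rank_adopt_B:
  assumes "node_consistent Q al s" "st s IB \<noteq> Adopted"
  shows "A_rank (adopt t IB s) = A_rank s"
proof (cases "st s IA = Adopted")
  case True
  then have "aord s = [IA]"
    using aord_eq_single[OF assms(1), of IA] assms(2) by simp
  then show ?thesis
    using assms(2) True unfolding A_rank_def B_first_flag_def by simp
qed (simp add: A_rank_def)

definition adopted_by :: "nat \<Rightarrow> nstate \<Rightarrow> bool" where
  "adopted_by t s \<longleftrightarrow> (\<forall>X k. atime s X = Some k \<longrightarrow> k \<le> t)"

lemma adopted_by_inform: "adopted_by t s \<Longrightarrow> adopted_by t (inform Q al t X s)"
  unfolding adopted_by_def using atime_inform by (metis insertE order_refl option.inject singletonD)

lemma adopted_by_fold_inform: "adopted_by t s \<Longrightarrow> adopted_by t (fold (inform Q al t) L s)"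
  by (induction L arbitrary: s) (simp_all add: adopted_by_inform)

text \<open>At equal adoption steps the flags compare correctly because the two states agree on \<open>B\<close>.\<close>

lemma A_rank_le_adopt_A:
  assumes n: "node_consistent Q al s1" "node_consistent Q al' s2" and B: "same_B s1 s2"
    and adopted: "st s1 IA = Adopted" and tb: "adopted_by t s1" and idle: "st s2 IA = Idle"
  shows "A_rank s1 \<le> A_rank (adopt t IA s2)"
proof -
  obtain k where k: "atime s1 IA = Some k"
    using st_eq_Adopted_iff[OF n(1), of IA] adopted by auto
  then have "k \<le> t"
    using tb unfolding adopted_by_def by simp
  have "aord (adopt t IA s2) = (if st s2 IB = Adopted then [IB, IA] else [IA])"
    using aord_eq_single[OF n(2), of IB] aord_eq_Nil[OF n(2)] idle by auto
  then have flag: "B_first_flag (adopt t IA s2) = (if st s2 IB = Adopted \<and> atime s2 IB = Some t then 1 else 0)"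
    unfolding B_first_flag_def by auto
  have "2 * k + B_first_flag s1 \<le> 2 * t + B_first_flag (adopt t IA s2)"
  proof (cases "k < t")
    case False
    with \<open>k \<le> t\<close> have "k = t" by simp
    then show ?thesis
      using B k flag unfolding same_B_def by (simp add: B_first_flag_def[of s1])
  qed (auto simp: B_first_flag_def)
  then show ?thesis
    using adopted k unfolding A_rank_def by simp
qed

context B_accepted
begin

lemma earlier_A_inform_B:
  assumes m: "earlier_A s1 s2" and n: "node_consistent Q al s1" "node_consistent Q al s2"
  shows "earlier_A (inform Q al t IB s1) (inform Q al t IB s2)"
proof (cases "st s1 IB = Idle")
  case True
  moreover have "st s2 IB = Idle"
    using m True unfolding earlier_A_def same_B_def by simp
  ultimately have "A_rank (adopt t IB s1) = A_rank s1" "A_rank (adopt t IB s2) = A_rank s2"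
    using A_rank_adopt_B[OF n(1)] A_rank_adopt_B[OF n(2)] by simp_all
  then show ?thesis
    using m True \<open>st s2 IB = Idle\<close> inform_B_eq[OF n(1)] inform_B_eq[OF n(2)]
    unfolding earlier_A_def same_B_def by simp
next
  case False
  then show ?thesis
    using m inform_B_eq[OF n(1)] inform_B_eq[OF n(2)] unfolding earlier_A_def same_B_def by simp
qed

lemma earlier_A_inform_A_left:
  assumes m: "earlier_A s1 s2" and n: "node_consistent Q al s1"
  shows "earlier_A (inform Q al t IA s1) s2"
proof (cases "st s1 IA = Idle")
  case True
  then have "st s2 IA = Idle"
    using m unfolding earlier_A_def by simp
  then show ?thesis
    using m inform_A_eq[OF n] unfolding earlier_A_def same_B_def A_rank_def by auto
qed (use m inform_A_eq[OF n] in simp)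

lemma earlier_A_inform_A_right:
  assumes m: "earlier_A s1 s2" and n: "node_consistent Q al s1" "node_consistent Q al s2"
    and tb: "adopted_by t s1" and nonidle: "st s1 IA \<noteq> Idle"
  shows "earlier_A s1 (inform Q al t IA s2)"
proof (cases "st s2 IA = Idle")
  case idle: True
  have B: "st s1 IB = st s2 IB"
    using m unfolding earlier_A_def same_B_def by simp
  show ?thesis
  proof (cases "st s1 IA = Rejected")
    case True
    then have "st s2 IB = Adopted" "\<not> al IA \<le> q_cond Q IA"
      using n(1) B unfolding node_consistent_def by auto
    then show ?thesis
      using m True idle inform_A_eq[OF n(2)] unfolding earlier_A_def same_B_def A_rank_def by auto
  next
    case False
    then have adopted: "st s1 IA = Adopted"
      using nonidle n(1) unfolding node_consistent_def by (cases "st s1 IA") auto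
    have "A_rank s1 \<le> A_rank (adopt t IA s2)"
      using A_rank_le_adopt_A[OF n m[unfolded earlier_A_def, THEN conjunct1] adopted tb] idle by simp
    then show ?thesis
      using m adopted idle inform_A_eq[OF n(2)] unfolding earlier_A_def same_B_def A_rank_def by auto
  qed
qed (use m inform_A_eq[OF n(2)] in simp)

lemma earlier_A_inform_A:
  assumes m: "earlier_A s1 s2" and n: "node_consistent Q al s1" "node_consistent Q al s2"
    and tb: "adopted_by t s1"
  shows "earlier_A (inform Q al t IA s1) (inform Q al t IA s2)"
proof (cases "st s1 IA = Idle")
  case True
  then have "s1 = s2"
    using eq_if_A_idle[OF n] m unfolding earlier_A_def by simp
  then show ?thesis by simp
next
  case False
  then show ?thesis
    using earlier_A_inform_A_right[OF m n tb False] by (simp add: inform_unchanged_if_nonidle)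
qed

lemma earlier_A_fold_inform:
  "earlier_A s1 s2 \<Longrightarrow> node_consistent Q al s1 \<Longrightarrow> node_consistent Q al s2 \<Longrightarrow> adopted_by t s1 \<Longrightarrow>
    earlier_A (fold (inform Q al t) L s1) (fold (inform Q al t) L s2)"
proof (induction L arbitrary: s1 s2)
  case (Cons X L)
  have "earlier_A (inform Q al t X s1) (inform Q al t X s2)"
    using Cons.prems earlier_A_inform_B earlier_A_inform_A by (cases X) auto
  then show ?case
    using Cons.IH Cons.prems consistent_inform adopted_by_inform by simp
qed simp

lemma earlier_A_fold_A_before_B:
  assumes m: "earlier_A s1 s2" and n: "node_consistent Q al s1" "node_consistent Q al s2"
    and tb: "adopted_by t s1"
  shows "earlier_A (fold (inform Q al t) [IA, IB] s1) (fold (inform Q al t) [IB, IA] s2)"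
proof -
  let ?iA = "inform Q al t IA" and ?iB = "inform Q al t IB"
  have nA: "node_consistent Q al (?iA s1)"
    by (rule consistent_inform[OF n(1)])
  have "earlier_A (?iA s1) s2"
    by (rule earlier_A_inform_A_left[OF m n(1)])
  then have "earlier_A (?iB (?iA s1)) (?iB s2)"
    by (rule earlier_A_inform_B[OF _ nA n(2)])
  moreover have "st (?iB (?iA s1)) IA \<noteq> Idle"
    by (intro st_inform_nonidle st_inform_informed)
  ultimately have "earlier_A (?iB (?iA s1)) (?iA (?iB s2))"
    using consistent_inform[OF nA] consistent_inform[OF n(2)] adopted_by_inform[OF adopted_by_inform[OF tb]]
    by (intro earlier_A_inform_A_right)
  then show ?thesis by simp
qed

lemma earlier_A_fold_A_left_only:
  assumes m: "earlier_A s1 s2" and n: "node_consistent Q al s1" "node_consistent Q al s2"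
  shows "earlier_A (fold (inform Q al t) (if b then (if o1 then [IB, IA] else [IA, IB]) else [IA]) s1)
                   (fold (inform Q al t) (if b then [IB] else []) s2)"
proof -
  let ?iA = "inform Q al t IA" and ?iB = "inform Q al t IB"
  have A_left: "earlier_A (?iA s1) s2"
    by (rule earlier_A_inform_A_left[OF m n(1)])
  have B_both: "earlier_A (?iB s1) (?iB s2)"
    by (rule earlier_A_inform_B[OF m n])
  have "earlier_A (?iA (?iB s1)) (?iB s2)"
    by (rule earlier_A_inform_A_left[OF B_both consistent_inform[OF n(1)]])
  moreover have "earlier_A (?iB (?iA s1)) (?iB s2)"
    by (rule earlier_A_inform_B[OF A_left consistent_inform[OF n(1)] n(2)])
  ultimately show ?thesis
    using A_left B_both by simp
qed

lemma earlier_A_fold_A_right_only: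
  assumes m: "earlier_A s1 s2" and n: "node_consistent Q al s1" "node_consistent Q al s2"
    and tb: "adopted_by t s1" and nonidle: "st s1 IA \<noteq> Idle"
  shows "earlier_A (fold (inform Q al t) (if b then [IB] else []) s1)
                   (fold (inform Q al t) (if b then (if o2 then [IB, IA] else [IA, IB]) else [IA]) s2)"
proof -
  let ?iA = "inform Q al t IA" and ?iB = "inform Q al t IB"
  have A_right: "earlier_A s1 (?iA s2)"
    by (rule earlier_A_inform_A_right[OF m n tb nonidle])
  have B_both: "earlier_A (?iB s1) (?iB s2)"
    by (rule earlier_A_inform_B[OF m n])
  have "earlier_A (?iB s1) (?iB (?iA s2))"
    by (rule earlier_A_inform_B[OF A_right n(1) consistent_inform[OF n(2)]])
  moreover have "earlier_A (?iB s1) (?iA (?iB s2))"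
    by (rule earlier_A_inform_A_right[OF B_both consistent_inform[OF n(1)] consistent_inform[OF n(2)]
          adopted_by_inform[OF tb] st_inform_nonidle[OF nonidle]])
  ultimately show ?thesis
    using A_right by simp
qed

text \<open>The lists below are the possible values of \<open>new_items t\<close> at a neighbour in the two runs
  (see \<open>new_items_cases\<close>); the \<open>B\<close>-part \<open>b\<close> is shared since the diffusion of \<open>B\<close> is the same.\<close>

lemma earlier_A_fold_new_items_cases:
  assumes m: "earlier_A s1 s2" and n: "node_consistent Q al s1" "node_consistent Q al s2"
    and tb: "adopted_by t s1"
    and g1: "g1 = (if a1 then (if b then (if o1 then [IB, IA] else [IA, IB]) else [IA]) else (if b then [IB] else []))"
    and g2: "g2 = (if a2 then (if b then (if o2 then [IB, IA] else [IA, IB]) else [IA]) else (if b then [IB] else []))"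
    and right_only: "a2 \<Longrightarrow> \<not> a1 \<Longrightarrow> st s1 IA \<noteq> Idle"
    and B_first: "a1 \<Longrightarrow> a2 \<Longrightarrow> b \<Longrightarrow> o1 \<Longrightarrow> o2"
  shows "earlier_A (fold (inform Q al t) g1 s1) (fold (inform Q al t) g2 s2)"
proof (cases "a1 = a2 \<and> (a1 \<longrightarrow> b \<longrightarrow> o1 = o2)")
  case True
  then have "g1 = g2" using g1 g2 by auto
  then show ?thesis using earlier_A_fold_inform[OF m n tb] by simp
next
  case False
  consider "a1" "a2" | "a1" "\<not> a2" | "\<not> a1" "a2"
    using False by blast
  then show ?thesis
  proof cases
    case 1
    then have "g1 = [IA, IB]" "g2 = [IB, IA]"
      using False B_first g1 g2 by auto
    then show ?thesis using earlier_A_fold_A_before_B[OF m n tb] by simp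
  next
    case 2
    then show ?thesis using earlier_A_fold_A_left_only[OF m n] g1 g2 by simp
  next
    case 3
    then show ?thesis using earlier_A_fold_A_right_only[OF m n tb right_only] g1 g2 by simp
  qed
qed

lemma earlier_A_new_items:
  assumes m: "earlier_A s1 s2" and n: "node_consistent Q al s1" "node_consistent Q al s2"
    and tb: "adopted_by t' s1"
    and mu: "earlier_A u1 u2" and nu: "node_consistent Q a1 u1" "node_consistent Q a2 u2"
    and informed: "atime u1 IA \<notin> {None, Some t} \<Longrightarrow> st s1 IA \<noteq> Idle"
  shows "earlier_A (fold (inform Q al t') (new_items t u1) s1) (fold (inform Q al t') (new_items t u2) s2)"
proof -
  have B: "atime u1 IB = atime u2 IB"
    using mu unfolding earlier_A_def same_B_def by simp
  have right_only: "st s1 IA \<noteq> Idle" if "atime u2 IA = Some t" "atime u1 IA \<noteq> Some t"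
  proof -
    have "A_rank u2 \<noteq> \<infinity>"
      using st_eq_Adopted_iff[OF nu(2), of IA] that(1) by (simp add: A_rank_eq_infinity_iff)
    then have "A_rank u1 \<noteq> \<infinity>"
      using mu unfolding earlier_A_def by (metis enat_ord_simps(5))
    then have "atime u1 IA \<noteq> None"
      using st_eq_Adopted_iff[OF nu(1), of IA] by (simp add: A_rank_eq_infinity_iff)
    then show ?thesis
      using informed that(2) by simp
  qed
  have B_first: "aord u2 = [IB, IA]"
    if "atime u1 IA = Some t" "atime u2 IA = Some t" "atime u1 IB = Some t" "aord u1 = [IB, IA]"
  proof -
    have adopted: "st u1 IA = Adopted" "st u2 IA = Adopted" "st u1 IB = Adopted" "st u2 IB = Adopted"
      using st_eq_Adopted_iff[OF nu(1)] st_eq_Adopted_iff[OF nu(2)] that B by auto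
    have "A_rank u1 = enat (2 * t + 1)" "A_rank u2 = enat (2 * t + B_first_flag u2)"
      using adopted that B unfolding A_rank_def B_first_flag_def by simp_all
    then have "B_first_flag u2 \<ge> 1"
      using mu unfolding earlier_A_def by simp
    then show ?thesis
      unfolding B_first_flag_def by (auto split: if_splits)
  qed
  have "new_items t u2 =
    (if atime u2 IA = Some t then
       (if atime u1 IB = Some t then (if aord u2 = [IB, IA] then [IB, IA] else [IA, IB]) else [IA])
     else if atime u1 IB = Some t then [IB] else [])"
    using new_items_cases[OF nu(2)] B by simp
  then show ?thesis
    by (rule earlier_A_fold_new_items_cases[OF m n tb new_items_cases[OF nu(1)]]) (use right_only B_first in auto)
qed

lemma earlier_A_deliver:
  assumes "earlier_A s1 s2" "node_consistent Q al s1" "node_consistent Q al s2" "adopted_by t' s1"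
    and "\<forall>u\<in>set us. earlier_A (R1 u) (R2 u) \<and> node_consistent Q (a1 u) (R1 u) \<and> node_consistent Q (a2 u) (R2 u)"
    and "\<forall>u\<in>set us. lv u \<longrightarrow> atime (R1 u) IA \<notin> {None, Some t} \<longrightarrow> st s1 IA \<noteq> Idle"
  shows "earlier_A (fold (inform Q al t') (concat (map (\<lambda>u. if lv u then new_items t (R1 u) else []) us)) s1)
                   (fold (inform Q al t') (concat (map (\<lambda>u. if lv u then new_items t (R2 u) else []) us)) s2)"
  using assms
proof (induction us arbitrary: s1 s2)
  case (Cons u us)
  let ?s1 = "fold (inform Q al t') (if lv u then new_items t (R1 u) else []) s1"
  let ?s2 = "fold (inform Q al t') (if lv u then new_items t (R2 u) else []) s2"
  have "earlier_A ?s1 ?s2"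
    using earlier_A_new_items[OF Cons.prems(1-4), of "R1 u" "R2 u" "a1 u" "a2 u" t] Cons.prems(1,5,6)
    by simp
  moreover have "node_consistent Q al ?s1" "node_consistent Q al ?s2" "adopted_by t' ?s1"
    using Cons.prems(2-4) consistent_fold_inform adopted_by_fold_inform by auto
  moreover have "\<forall>u\<in>set us. lv u \<longrightarrow> atime (R1 u) IA \<notin> {None, Some t} \<longrightarrow> st ?s1 IA \<noteq> Idle"
    using Cons.prems(6) st_fold_inform_nonidle by (metis list.set_intros(2))
  ultimately show ?case
    using Cons.IH Cons.prems(5) by simp
qed simp

end

lemma earlier_A_seed_state: "S2 \<subseteq> S1 \<Longrightarrow> earlier_A (seed_state S1 SB tau v) (seed_state S2 SB tau v)"
  unfolding seed_state_def earlier_A_def same_B_def A_rank_def init_node_def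
  by (cases "tau v") auto

lemma earlier_A_run:
  assumes alpha_le: "\<forall>X v. alpha (X, v) \<le> q_none Q X" and accept_B: "\<forall>v. alpha (IB, v) \<le> q_cond Q IB"
    and sub: "S2 \<subseteq> S1"
  shows "earlier_A (run Q S1 SB ((live, prm, tau), alpha) t v) (run Q S2 SB ((live, prm, tau), alpha) t v)"
proof (induction t arbitrary: v)
  case (Suc t)
  let ?R = "run Q S1 SB ((live, prm, tau), alpha) t" and ?M = "run Q S2 SB ((live, prm, tau), alpha) t"
  interpret B_accepted Q "\<lambda>X. alpha (X, v)"
    by unfold_locales (use alpha_le accept_B in auto)
  have consistent: "node_consistent Q (\<lambda>X. alpha (X, u)) (?R u)" "node_consistent Q (\<lambda>X. alpha (X, u)) (?M u)" for u
    using node_consistent_run[where alpha = alpha, OF alpha_le] by blast+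
  have "st (?R v) IA \<noteq> Idle" if "u \<in> set (prm v)" "live (u, v)" "atime (?R u) IA \<notin> {None, Some t}" for u
    using run_informed_before[where alpha = alpha, OF alpha_le that(2,1,3)] .
  moreover have "adopted_by (Suc t) (?R v)"
    unfolding adopted_by_def using run_atime_le[of Q S1 SB "((live, prm, tau), alpha)" t v] le_SucI by blast
  ultimately show ?case
    unfolding run_Suc_eq using Suc.IH consistent by (intro earlier_A_deliver) auto
qed (use earlier_A_seed_state[OF sub] in simp)

section \<open>The union property\<close>

text \<open>Under the seed set \<open>S \<union> T\<close>, a node that adopts \<open>A\<close> does so with the same rank as under
  \<open>S\<close> or under \<open>T\<close>: \<open>A\<close> reaches it along the path that is fastest in one of the two runs.\<close>

definition A_rank_from_either :: "nstate \<Rightarrow> nstate \<Rightarrow> nstate \<Rightarrow> bool" where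
  "A_rank_from_either s s1 s2 \<longleftrightarrow> st s IA \<noteq> Adopted \<or> A_rank s = A_rank s1 \<or> A_rank s = A_rank s2"

lemma B_first_flag_le: "B_first_flag s \<le> 1"
  unfolding B_first_flag_def by simp

lemma double_add_bit_inject: "2 * (a::nat) + b = 2 * c + d \<Longrightarrow> b \<le> 1 \<Longrightarrow> d \<le> 1 \<Longrightarrow> a = c \<and> b = d"
  by presburger

lemma new_items_eq_if_A_rank_eq:
  assumes n: "node_consistent Q a1 s1" "node_consistent Q a2 s2" and B: "same_B s1 s2"
    and adopted: "st s1 IA = Adopted" and rank: "A_rank s1 = A_rank s2"
  shows "new_items t s1 = new_items t s2"
proof -
  have "st s2 IA = Adopted"
    using rank adopted A_rank_eq_infinity_iff by metis
  then obtain k1 k2 where k1: "atime s1 IA = Some k1" and k2: "atime s2 IA = Some k2"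
    using st_eq_Adopted_iff[OF n(1), of IA] st_eq_Adopted_iff[OF n(2), of IA] adopted by auto
  with rank adopted \<open>st s2 IA = Adopted\<close>
  have "2 * k1 + B_first_flag s1 = 2 * k2 + B_first_flag s2"
    unfolding A_rank_def by simp
  then have "k1 = k2 \<and> B_first_flag s1 = B_first_flag s2"
    by (rule double_add_bit_inject[OF _ B_first_flag_le B_first_flag_le])
  then have same_time: "k1 = k2" and same_flag: "B_first_flag s1 = B_first_flag s2"
    by simp_all
  have same_B_st: "st s1 IB = st s2 IB" "atime s1 IB = atime s2 IB"
    using B unfolding same_B_def by auto
  have same_order: "aord s1 = [IB, IA] \<longleftrightarrow> aord s2 = [IB, IA]" if "atime s1 IB = Some t" "k1 = t"
  proof -
    have "st s1 IB = Adopted" "st s2 IB = Adopted"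
      using st_eq_Adopted_iff[OF n(1), of IB] same_B_st that by auto
    then have "B_first_flag s1 = (if aord s1 = [IB, IA] then 1 else 0)"
      "B_first_flag s2 = (if aord s2 = [IB, IA] then 1 else 0)"
      using that k1 k2 same_time same_B_st by (simp_all add: B_first_flag_def)
    then show ?thesis
      using same_flag by (cases "aord s1 = [IB, IA]"; cases "aord s2 = [IB, IA]") simp_all
  qed
  show ?thesis
  proof (cases "k1 = t \<and> atime s1 IB = Some t")
    case True
    then show ?thesis
      unfolding new_items_cases[OF n(1)] new_items_cases[OF n(2)] using k1 k2 same_time same_B_st same_order by simp
  next
    case False
    then show ?thesis
      unfolding new_items_cases[OF n(1)] new_items_cases[OF n(2)] using k1 k2 same_time same_B_st by auto
  qed
qed

context B_accepted
begin

lemma st_A_inform_nonidle: "node_consistent Q al s \<Longrightarrow> st s IA \<noteq> Idle \<Longrightarrow> st (inform Q al t X s) IA = st s IA"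
  by (cases X) (simp_all add: inform_A_eq inform_B_eq)

lemma A_rank_inform:
  assumes "node_consistent Q al s" "st s IA = Adopted"
  shows "A_rank (inform Q al t X s) = A_rank s"
proof (cases X)
  case IB
  then show ?thesis
    using assms A_rank_adopt_B[OF assms(1)] by (cases "st s IB = Idle") (simp_all add: inform_B_eq)
qed (use assms in \<open>simp add: inform_A_eq\<close>)

lemma st_A_fold_inform_nonidle:
  "node_consistent Q al s \<Longrightarrow> st s IA \<noteq> Idle \<Longrightarrow> st (fold (inform Q al t) L s) IA = st s IA"
  by (induction L arbitrary: s) (simp_all add: consistent_inform st_A_inform_nonidle)

lemma A_rank_fold_inform:
  "node_consistent Q al s \<Longrightarrow> st s IA = Adopted \<Longrightarrow> A_rank (fold (inform Q al t) L s) = A_rank s"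
  by (induction L arbitrary: s) (simp_all add: consistent_inform st_A_inform_nonidle A_rank_inform)

lemma st_A_fold_inform_B:
  "node_consistent Q al s \<Longrightarrow> set L \<subseteq> {IB} \<Longrightarrow> st (fold (inform Q al t) L s) IA = st s IA"
proof (induction L arbitrary: s)
  case (Cons X L)
  have "st (inform Q al t IB s) IA = st s IA"
    by (simp add: inform_B_eq[OF Cons.prems(1)])
  then show ?case
    using Cons.IH[OF consistent_inform[OF Cons.prems(1)]] Cons.prems(2) by simp
qed simp

lemma A_rank_from_either_nonidle:
  assumes n: "node_consistent Q al s1" "node_consistent Q al s2" "node_consistent Q al s3"
    and j: "A_rank_from_either s1 s2 s3" and nonidle: "st s1 IA \<noteq> Idle"
  shows "A_rank_from_either (fold (inform Q al t') L1 s1) (fold (inform Q al t') L2 s2) (fold (inform Q al t') L3 s3)"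
proof (cases "st s1 IA = Adopted")
  case True
  have kept: "st (fold (inform Q al t') L1 s1) IA = Adopted" "A_rank (fold (inform Q al t') L1 s1) = A_rank s1"
    using st_A_fold_inform_nonidle[OF n(1) nonidle] A_rank_fold_inform[OF n(1) True] True by simp_all
  from j True have "A_rank s1 = A_rank s2 \<or> A_rank s1 = A_rank s3"
    unfolding A_rank_from_either_def by simp
  then show ?thesis
  proof
    assume same: "A_rank s1 = A_rank s2"
    then have "st s2 IA = Adopted"
      using True by (metis A_rank_eq_infinity_iff)
    then show ?thesis
      using kept same A_rank_fold_inform[OF n(2)] unfolding A_rank_from_either_def by simp
  next
    assume same: "A_rank s1 = A_rank s3"
    then have "st s3 IA = Adopted"
      using True by (metis A_rank_eq_infinity_iff)
    then show ?thesis
      using kept same A_rank_fold_inform[OF n(3)] unfolding A_rank_from_either_def by simp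
  qed
qed (use st_A_fold_inform_nonidle[OF n(1) nonidle] in \<open>simp add: A_rank_from_either_def\<close>)

lemma A_rank_from_either_new_items:
  assumes m: "earlier_A s1 s2" "earlier_A s1 s3"
    and n: "node_consistent Q al s1" "node_consistent Q al s2" "node_consistent Q al s3"
    and j: "A_rank_from_either s1 s2 s3"
    and mu: "earlier_A u1 u2" "earlier_A u1 u3" and ju: "A_rank_from_either u1 u2 u3"
    and nu: "node_consistent Q a1 u1" "node_consistent Q a2 u2" "node_consistent Q a3 u3"
  shows "A_rank_from_either (fold (inform Q al t') (new_items t u1) s1)
           (fold (inform Q al t') (new_items t u2) s2) (fold (inform Q al t') (new_items t u3) s3)"
proof (cases "st s1 IA = Idle")
  case False
  then show ?thesis by (rule A_rank_from_either_nonidle[OF n j])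
next
  case idle: True
  then have "s1 = s2" "s1 = s3"
    using eq_if_A_idle[OF n(1) n(2)] eq_if_A_idle[OF n(1) n(3)] m unfolding earlier_A_def by auto
  show ?thesis
  proof (cases "atime u1 IA = Some t")
    case False
    then have "set (new_items t u1) \<subseteq> {IB}"
      unfolding new_items_cases[OF nu(1)] by auto
    then have "st (fold (inform Q al t') (new_items t u1) s1) IA = Idle"
      using st_A_fold_inform_B[OF n(1)] idle by simp
    then show ?thesis unfolding A_rank_from_either_def by simp
  next
    case True
    then have adopted: "st u1 IA = Adopted"
      using st_eq_Adopted_iff[OF nu(1), of IA] by auto
    have "same_B u1 u2" "same_B u1 u3"
      using mu unfolding earlier_A_def by simp_all
    moreover have "A_rank u1 = A_rank u2 \<or> A_rank u1 = A_rank u3"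
      using ju adopted unfolding A_rank_from_either_def by simp
    ultimately have "new_items t u1 = new_items t u2 \<or> new_items t u1 = new_items t u3"
      using new_items_eq_if_A_rank_eq[OF nu(1) nu(2) _ adopted] new_items_eq_if_A_rank_eq[OF nu(1) nu(3) _ adopted]
      by blast
    then show ?thesis
      using \<open>s1 = s2\<close> \<open>s1 = s3\<close> unfolding A_rank_from_either_def by auto
  qed
qed

lemma A_rank_from_either_deliver:
  assumes "earlier_A s1 s2" "earlier_A s1 s3"
    and "node_consistent Q al s1" "node_consistent Q al s2" "node_consistent Q al s3"
    and "adopted_by t' s1" "A_rank_from_either s1 s2 s3"
    and "\<forall>u\<in>set us. earlier_A (R1 u) (R2 u) \<and> earlier_A (R1 u) (R3 u) \<and> A_rank_from_either (R1 u) (R2 u) (R3 u) \<and>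
           node_consistent Q (a u) (R1 u) \<and> node_consistent Q (a u) (R2 u) \<and> node_consistent Q (a u) (R3 u)"
    and "\<forall>u\<in>set us. lv u \<longrightarrow> atime (R1 u) IA \<notin> {None, Some t} \<longrightarrow> st s1 IA \<noteq> Idle"
  shows "A_rank_from_either
    (fold (inform Q al t') (concat (map (\<lambda>u. if lv u then new_items t (R1 u) else []) us)) s1)
    (fold (inform Q al t') (concat (map (\<lambda>u. if lv u then new_items t (R2 u) else []) us)) s2)
    (fold (inform Q al t') (concat (map (\<lambda>u. if lv u then new_items t (R3 u) else []) us)) s3)"
  using assms
proof (induction us arbitrary: s1 s2 s3)
  case (Cons u us)
  let ?s = "\<lambda>R s. fold (inform Q al t') (if lv u then new_items t (R u) else []) s"
  have hu: "earlier_A (R1 u) (R2 u)" "earlier_A (R1 u) (R3 u)" "A_rank_from_either (R1 u) (R2 u) (R3 u)"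
    "node_consistent Q (a u) (R1 u)" "node_consistent Q (a u) (R2 u)" "node_consistent Q (a u) (R3 u)"
    using Cons.prems(8) by auto
  have "earlier_A (?s R1 s1) (?s R2 s2)" "earlier_A (?s R1 s1) (?s R3 s3)"
    using earlier_A_new_items[OF Cons.prems(1,3,4,6) hu(1,4,5), of t] Cons.prems(1,9)
      earlier_A_new_items[OF Cons.prems(2,3,5,6) hu(2,4,6), of t] Cons.prems(2) by auto
  moreover have "A_rank_from_either (?s R1 s1) (?s R2 s2) (?s R3 s3)"
    using A_rank_from_either_new_items[OF Cons.prems(1-5,7) hu(1-6), of t' t] Cons.prems(7) by simp
  moreover have "node_consistent Q al (?s R1 s1)" "node_consistent Q al (?s R2 s2)"
    "node_consistent Q al (?s R3 s3)" "adopted_by t' (?s R1 s1)"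
    using Cons.prems(3-6) consistent_fold_inform adopted_by_fold_inform by auto
  moreover have "\<forall>u\<in>set us. lv u \<longrightarrow> atime (R1 u) IA \<notin> {None, Some t} \<longrightarrow> st (?s R1 s1) IA \<noteq> Idle"
    using Cons.prems(9) st_fold_inform_nonidle by (metis list.set_intros(2))
  ultimately show ?case
    using Cons.IH Cons.prems(8) by simp
qed simp

end

lemma A_rank_from_either_seed_state:
  "A_rank_from_either (seed_state (S \<union> T) SB tau v) (seed_state S SB tau v) (seed_state T SB tau v)"
  unfolding A_rank_from_either_def seed_state_def by (auto simp: init_node_def)

lemma A_rank_from_either_run:
  assumes alpha_le: "\<forall>X v. alpha (X, v) \<le> q_none Q X" and accept_B: "\<forall>v. alpha (IB, v) \<le> q_cond Q IB"
  shows "A_rank_from_either (run Q (S \<union> T) SB ((live, prm, tau), alpha) t v)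
    (run Q S SB ((live, prm, tau), alpha) t v) (run Q T SB ((live, prm, tau), alpha) t v)"
proof (induction t arbitrary: v)
  case (Suc t)
  let ?R = "run Q (S \<union> T) SB ((live, prm, tau), alpha) t" and ?R1 = "run Q S SB ((live, prm, tau), alpha) t"
    and ?R2 = "run Q T SB ((live, prm, tau), alpha) t"
  interpret B_accepted Q "\<lambda>X. alpha (X, v)"
    by unfold_locales (use alpha_le accept_B in auto)
  have earlier: "earlier_A (?R u) (?R1 u)" "earlier_A (?R u) (?R2 u)" for u
    by (intro earlier_A_run[where alpha = alpha, OF alpha_le accept_B]; simp)+
  have consistent: "node_consistent Q (\<lambda>X. alpha (X, u)) (?R u)" "node_consistent Q (\<lambda>X. alpha (X, u)) (?R1 u)"
    "node_consistent Q (\<lambda>X. alpha (X, u)) (?R2 u)" for u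
    using node_consistent_run[where alpha = alpha, OF alpha_le] by blast+
  have "st (?R v) IA \<noteq> Idle" if "u \<in> set (prm v)" "live (u, v)" "atime (?R u) IA \<notin> {None, Some t}" for u
    using run_informed_before[where alpha = alpha, OF alpha_le that(2,1,3)] .
  moreover have "adopted_by (Suc t) (?R v)"
    unfolding adopted_by_def using run_atime_le[of Q "S \<union> T" SB "((live, prm, tau), alpha)" t v] le_SucI by blast
  ultimately show ?case
    unfolding run_Suc_eq using Suc.IH earlier consistent by (intro A_rank_from_either_deliver) auto
qed (use A_rank_from_either_seed_state in simp)

section \<open>Adopters of \<open>A\<close> in a fixed world\<close>

definition A_adopters :: "gaps \<Rightarrow> 'v set \<Rightarrow> 'v set \<Rightarrow> 'v world \<Rightarrow> 'v set" where
  "A_adopters Q SA SB w = {v. st (final_state Q SA SB w v) IA = Adopted}"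

lemma A_adopted_union_if_B_accepted:
  assumes "\<forall>X v. alpha (X, v) \<le> q_none Q X" "\<forall>v. alpha (IB, v) \<le> q_cond Q IB"
  shows "st (run Q (S \<union> T) SB ((live, prm, tau), alpha) t v) IA = Adopted \<longleftrightarrow>
    st (run Q S SB ((live, prm, tau), alpha) t v) IA = Adopted \<or> st (run Q T SB ((live, prm, tau), alpha) t v) IA = Adopted"
    (is "st ?R IA = Adopted \<longleftrightarrow> st ?R1 IA = Adopted \<or> st ?R2 IA = Adopted")
proof -
  have "A_rank ?R \<le> A_rank ?R1" "A_rank ?R \<le> A_rank ?R2"
    using earlier_A_run[OF assms] unfolding earlier_A_def by blast+
  moreover have "A_rank_from_either ?R ?R1 ?R2"
    by (rule A_rank_from_either_run[OF assms])
  ultimately show ?thesis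
    unfolding A_rank_from_either_def by (metis A_rank_eq_infinity_iff enat_ord_simps(5))
qed

lemma q_none_eq_1 [simp]: "q_none (1, qAB, 1, qBA) X = 1"
  by (cases X) auto

text \<open>This is where \<open>q_{A|\<emptyset>} = q_{B|\<emptyset>} = 1\<close> is used: no node ever suspends an item, so
  accepting \<open>B\<close> everywhere (threshold \<open>0 \<le> q_{B|A}\<close>) is harmless for \<open>A\<close>.\<close>

lemma A_adopters_union:
  fixes w :: "'v::finite world"
  assumes unit: "\<forall>i. snd w i \<in> {0..1}" and "0 \<le> qBA"
  shows "A_adopters (1, qAB, 1, qBA) (S \<union> T) SB w =
    A_adopters (1, qAB, 1, qBA) S SB w \<union> A_adopters (1, qAB, 1, qBA) T SB w"
proof -
  let ?Q = "(1, qAB, 1, qBA) :: gaps" and ?N = "2 * CARD('v)"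
  obtain live prm tau alpha where w: "w = ((live, prm, tau), alpha)"
    by (metis prod.exhaust)
  define alpha' :: "item \<times> 'v \<Rightarrow> real" where "alpha' = (\<lambda>(X, v). if X = IB then 0 else alpha (X, v))"
  have alpha_le: "\<forall>X v. alpha (X, v) \<le> q_none ?Q X" and alpha'_le: "\<forall>X v. alpha' (X, v) \<le> q_none ?Q X"
    using unit w by (simp_all add: alpha'_def)
  have accept_B: "\<forall>v. alpha' (IB, v) \<le> q_cond ?Q IB"
    using \<open>0 \<le> qBA\<close> by (simp add: alpha'_def)
  have same_A: "st (run ?Q S' SB ((live, prm, tau), alpha) t v) IA = st (run ?Q S' SB ((live, prm, tau), alpha') t v) IA"
    for S' t v
    using agrees_on_A_run[OF alpha_le alpha'_le _ accept_B] unfolding agrees_on_A_def by (simp add: alpha'_def)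
  show ?thesis
    unfolding A_adopters_def final_state_eq_run w same_A
    using A_adopted_union_if_B_accepted[OF alpha'_le accept_B] by blast
qed

section \<open>Measurability and integrability\<close>

lemma inform_cong_thresholds:
  assumes "\<forall>X. (al X \<le> q_none Q X) = (al' X \<le> q_none Q X) \<and> (al X \<le> q_cond Q X) = (al' X \<le> q_cond Q X)"
  shows "inform Q al t X s = inform Q al' t X s"
  using assms unfolding inform_def adopt_recons_def Let_def by simp

definition threshold_pattern :: "gaps \<Rightarrow> (item \<times> 'v \<Rightarrow> real) \<Rightarrow> item \<times> 'v \<Rightarrow> bool \<times> bool" where
  "threshold_pattern Q a = (\<lambda>i. (a i \<le> q_none Q (fst i), a i \<le> q_cond Q (fst i)))"

lemma A_adopters_threshold_pattern_cong:
  assumes "threshold_pattern Q a = threshold_pattern Q a'"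
  shows "A_adopters Q SA SB (d, a) = A_adopters Q SA SB (d, a')"
proof -
  obtain live prm tau where d: "d = (live, prm, tau)"
    by (metis prod.exhaust)
  have same_inform: "inform Q (\<lambda>X. a (X, v)) = inform Q (\<lambda>X. a' (X, v))" for v
    using assms inform_cong_thresholds[of "\<lambda>X. a (X, v)" Q "\<lambda>X. a' (X, v)"]
    unfolding threshold_pattern_def by (auto simp: fun_eq_iff)
  have "run Q SA SB ((live, prm, tau), a) t = run Q SA SB ((live, prm, tau), a') t" for t
  proof (induction t)
    case (Suc t)
    show ?case
      by (intro ext) (simp only: run_Suc_eq Suc.IH same_inform)
  qed simp
  then have "run Q SA SB (d, a) t = run Q SA SB (d, a') t" for t
    unfolding d .
  then show ?thesis
    unfolding A_adopters_def final_state_def by simp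
qed

abbreviation unit_thresholds :: "(item \<times> 'v \<Rightarrow> real) measure" where
  "unit_thresholds \<equiv> \<Pi>\<^sub>M i\<in>UNIV. uniform_measure lborel {0..1}"

lemma prob_space_unit_thresholds: "prob_space unit_thresholds"
  by (intro prob_space_PiM prob_space_uniform_measure) auto

lemma threshold_pattern_measurable:
  "threshold_pattern Q \<in> measurable (unit_thresholds :: (item \<times> 'v::finite \<Rightarrow> real) measure) (count_space UNIV)"
proof (subst measurable_count_space_eq2_countable, intro conjI ballI)
  fix b :: "item \<times> 'v \<Rightarrow> bool \<times> bool"
  have "threshold_pattern Q -` {b} \<inter> space unit_thresholds =
    (\<Inter>i. {a \<in> space unit_thresholds. (a i \<le> q_none Q (fst i)) = fst (b i) \<and> (a i \<le> q_cond Q (fst i)) = snd (b i)})"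
    by (auto simp: threshold_pattern_def space_PiM fun_eq_iff prod_eq_iff)
  also have "\<dots> \<in> sets unit_thresholds"
    by (intro sets.finite_INT) auto
  finally show "threshold_pattern Q -` {b} \<inter> space (unit_thresholds :: (item \<times> 'v \<Rightarrow> real) measure) \<in> sets unit_thresholds" .
qed (simp add: space_PiM)

lemma A_adopters_card_measurable:
  "(\<lambda>w. real (card (A_adopters Q SA SB w))) \<in> borel_measurable (world_measure (E :: ('v::finite \<times> 'v) set) p)"
proof -
  have sets: "sets (world_measure E p) = sets (count_space UNIV \<Otimes>\<^sub>M (unit_thresholds :: (item \<times> 'v \<Rightarrow> real) measure))"
    unfolding world_measure_def by (rule sets_pair_measure_cong) simp_all
  have "(\<lambda>w. real (card (A_adopters Q SA SB w))) \<in> borel_measurable (count_space UNIV \<Otimes>\<^sub>M unit_thresholds)"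
  proof (rule measurable_pair_measure_countable1)
    fix d :: "'v dworld"
    define rep where "rep b = (SOME a. threshold_pattern Q a = b)" for b :: "item \<times> 'v \<Rightarrow> bool \<times> bool"
    have rep_pattern: "threshold_pattern Q (rep (threshold_pattern Q a)) = threshold_pattern Q a" for a
      unfolding rep_def by (rule someI[where x = a]) (rule refl)
    have "(\<lambda>a. real (card (A_adopters Q SA SB (d, a)))) =
        (\<lambda>b. real (card (A_adopters Q SA SB (d, rep b)))) \<circ> threshold_pattern Q"
      using A_adopters_threshold_pattern_cong[OF rep_pattern[symmetric]] by (auto simp: fun_eq_iff)
    then show "(\<lambda>a. real (card (A_adopters Q SA SB (d, a)))) \<in> borel_measurable unit_thresholds"
      by (simp add: measurable_comp[OF threshold_pattern_measurable])
  qed simp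
  then show ?thesis
    unfolding measurable_cong_sets[OF sets refl] .
qed

lemma prob_space_world_measure: "prob_space (world_measure (E :: ('v::finite \<times> 'v) set) p)"
  unfolding world_measure_def
  by (intro prob_space_pair prob_space_measure_pmf prob_space_unit_thresholds)

lemma A_adopters_card_integrable:
  "integrable (world_measure (E :: ('v::finite \<times> 'v) set) p) (\<lambda>w. real (card (A_adopters Q SA SB w)))"
proof -
  interpret prob_space "world_measure E p"
    by (rule prob_space_world_measure)
  have "card (A_adopters Q SA SB w) \<le> CARD('v)" for w
    by (rule card_mono) auto
  then show ?thesis
    by (intro integrable_const_bound[where B = "real CARD('v)"] A_adopters_card_measurable) auto
qed

lemma AE_unit_thresholds: "AE w in world_measure (E :: ('v::finite \<times> 'v) set) p. \<forall>i. snd w i \<in> {0..1}"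
proof -
  have "AE a in (unit_thresholds :: (item \<times> 'v \<Rightarrow> real) measure). \<forall>i\<in>UNIV. a i \<in> {0..1}"
  proof (rule AE_finite_allI)
    fix i :: "item \<times> 'v"
    have "AE x in uniform_measure lborel {0..1::real}. x \<in> {0..1}"
      by (rule AE_uniform_measureI) auto
    then have "AE x in distr unit_thresholds (uniform_measure lborel {0..1::real}) (\<lambda>a. a i). x \<in> {0..1}"
      by (subst distr_PiM_component) (auto intro: prob_space_uniform_measure)
    then show "AE a in unit_thresholds. a i \<in> {0..1}"
      by (rule AE_distrD[rotated]) measurable
  qed simp
  then obtain N where N: "{a \<in> space unit_thresholds. \<not> (\<forall>i\<in>UNIV. a i \<in> {0..1})} \<subseteq> N"
    "emeasure unit_thresholds N = 0" "N \<in> sets (unit_thresholds :: (item \<times> 'v \<Rightarrow> real) measure)"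
    by (rule AE_E)
  interpret sigma_finite_measure "unit_thresholds :: (item \<times> 'v \<Rightarrow> real) measure"
    by (rule prob_space_imp_sigma_finite[OF prob_space_unit_thresholds])
  have "UNIV \<times> N \<in> null_sets (measure_pmf (dworld_pmf E p) \<Otimes>\<^sub>M unit_thresholds)"
    by (rule times_in_null_sets2) (use N in auto)
  moreover have "{w \<in> space (measure_pmf (dworld_pmf E p) \<Otimes>\<^sub>M unit_thresholds). \<not> (\<forall>i. snd w i \<in> {0..1})} \<subseteq> UNIV \<times> N"
  proof
    fix w :: "'v world"
    assume "w \<in> {w \<in> space (measure_pmf (dworld_pmf E p) \<Otimes>\<^sub>M unit_thresholds). \<not> (\<forall>i. snd w i \<in> {0..1})}"
    then have "snd w \<in> {a \<in> space unit_thresholds. \<not> (\<forall>i\<in>UNIV. a i \<in> {0..1})}"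
      by (simp add: space_PiM)
    then show "w \<in> UNIV \<times> N"
      using N(1) by (cases w) auto
  qed
  ultimately show ?thesis
    unfolding world_measure_def by (rule AE_I')
qed

section \<open>Submodularity\<close>

lemma submodular_card_union_hom:
  fixes F :: "'a set \<Rightarrow> 'b set"
  assumes "\<And>S T. F (S \<union> T) = F S \<union> F T" and "\<And>S. finite (F S)"
  shows "submodular (\<lambda>S. real (card (F S)))"
  unfolding submodular_def
proof (intro allI impI, elim conjE)
  fix S T :: "'a set" and x :: 'a
  assume "S \<subseteq> T"
  then have "F S \<subseteq> F T"
    using assms(1)[of S T] by (metis Un_absorb1 Un_upper1)
  have gain: "card (F (insert x U)) = card (F U) + card (F {x} - F U)" for U
  proof -
    have "F (insert x U) = F U \<union> (F {x} - F U)"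
      using assms(1)[of U "{x}"] by auto
    moreover have "card (F U \<union> (F {x} - F U)) = card (F U) + card (F {x} - F U)"
      by (rule card_Un_disjoint) (use assms(2) in auto)
    ultimately show ?thesis
      by (simp only:)
  qed
  have "card (F {x} - F T) \<le> card (F {x} - F S)"
    using \<open>F S \<subseteq> F T\<close> assms(2) by (intro card_mono) auto
  then show "real (card (F (insert x T))) - real (card (F T)) \<le> real (card (F (insert x S))) - real (card (F S))"
    unfolding gain by simp
qed

lemma submodular_integral:
  fixes f :: "'a set \<Rightarrow> 'b \<Rightarrow> real"
  assumes "\<And>S. integrable M (f S)" and "AE w in M. submodular (\<lambda>S. f S w)"
  shows "submodular (\<lambda>S. \<integral>w. f S w \<partial>M)"
  unfolding submodular_def
proof (intro allI impI, elim conjE)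
  fix S T :: "'a set" and x :: 'a
  assume "S \<subseteq> T" "x \<notin> T"
  have "AE w in M. 0 \<le> (f (insert x S) w - f S w) - (f (insert x T) w - f T w)"
    using assms(2) by eventually_elim (use \<open>S \<subseteq> T\<close> \<open>x \<notin> T\<close> in \<open>auto simp: submodular_def\<close>)
  then have "0 \<le> (\<integral>w. (f (insert x S) w - f S w) - (f (insert x T) w - f T w) \<partial>M)"
    by (rule integral_nonneg_AE)
  also have "\<dots> = ((\<integral>w. f (insert x S) w \<partial>M) - (\<integral>w. f S w \<partial>M)) -
      ((\<integral>w. f (insert x T) w \<partial>M) - (\<integral>w. f T w \<partial>M))"
    using assms(1) by simp
  finally show "(\<integral>w. f (insert x T) w \<partial>M) - (\<integral>w. f T w \<partial>M) \<le> (\<integral>w. f (insert x S) w \<partial>M) - (\<integral>w. f S w \<partial>M)"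
    by simp
qed

theorem mainTheorem9:
  fixes E :: "('v::finite \<times> 'v) set" and p :: "'v \<times> 'v \<Rightarrow> real"
    and qAB qBA :: real and SB :: "'v set"
  assumes "\<forall>e\<in>E. 0 \<le> p e \<and> p e \<le> 1"
    and "0 \<le> qAB" and "qAB \<le> 1" and "0 \<le> qBA" and "qBA \<le> 1"
  shows "submodular (\<lambda>SA. sigmaA E p (1, qAB, 1, qBA) SA SB)"
proof -
  have "AE w in world_measure E p. submodular (\<lambda>SA. real (card (A_adopters (1, qAB, 1, qBA) SA SB w)))"
    using AE_unit_thresholds
  proof eventually_elim
    case (elim w)
    show ?case
      using A_adopters_union[OF elim \<open>0 \<le> qBA\<close>] by (intro submodular_card_union_hom) auto
  qed
  then have "submodular (\<lambda>SA. \<integral>w. real (card (A_adopters (1, qAB, 1, qBA) SA SB w)) \<partial>world_measure E p)"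
    by (intro submodular_integral A_adopters_card_integrable)
  then show ?thesis
    unfolding sigmaA_def A_adopters_def .
qed

end
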